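(* For every $g\in G(\Gamma)$ and every $d\ge1$, the $d$-tail of $g$ contains at most $d\kappa$ syllables, where $\kappa$ is the maximal number of pairwise adjacent vertices of $\Gamma$.
   Context: $G(\Gamma)$ is the graph product of groups $\{G_v\}_{v\in\Gamma}$ over a finite simplicial graph $\Gamma$. Reduced words are words $(g_1,\dots,g_n)$, $g_i\in G_{v_i}$, that cannot be shortened by swapping consecutive syllables from adjacent vertex groups, merging consecutive syllables from the same vertex group, or deleting identity syllables; reduced words for the same element differ by such swaps. The $d$-tail of $g$ is the set of syllables of $g$ which occur among the last $d$ syllables of some reduced word representing $g$. *)

theory Defs
  imports "HOL-Algebra.Group"
begin

text \<open>The graph Gamma has vertex set V (finite) and a
symmetric irreflexive adjacency relation E.  Each vertex v carries a group G v
(all vertex groups live in a common element type).  A syllable is a pair (v, a)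
with a in the carrier of G v; a word is a list of syllables.\<close>

definition wf_word :: "'v set \<Rightarrow> ('v \<Rightarrow> 'g monoid) \<Rightarrow> ('v \<times> 'g) list \<Rightarrow> bool" where
  "wf_word V G w \<longleftrightarrow> (\<forall>(v,a)\<in>set w. v \<in> V \<and> a \<in> carrier (G v))"

definition swap_move :: "'v set \<Rightarrow> ('v \<Rightarrow> 'v \<Rightarrow> bool) \<Rightarrow> ('v \<Rightarrow> 'g monoid)
    \<Rightarrow> (('v \<times> 'g) list \<times> ('v \<times> 'g) list) set" where
  "swap_move V E G = {(xs @ [(u,a),(v,b)] @ ys, xs @ [(v,b),(u,a)] @ ys) | xs u a v b ys.
      wf_word V G (xs @ [(u,a),(v,b)] @ ys) \<and> E u v}"

definition merge_move :: "'v set \<Rightarrow> ('v \<Rightarrow> 'g monoid)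
    \<Rightarrow> (('v \<times> 'g) list \<times> ('v \<times> 'g) list) set" where
  "merge_move V G = {(xs @ [(v,a),(v,b)] @ ys, xs @ [(v, a \<otimes>\<^bsub>G v\<^esub> b)] @ ys) | xs v a b ys.
      wf_word V G (xs @ [(v,a),(v,b)] @ ys)}"

definition delete_move :: "'v set \<Rightarrow> ('v \<Rightarrow> 'g monoid)
    \<Rightarrow> (('v \<times> 'g) list \<times> ('v \<times> 'g) list) set" where
  "delete_move V G = {(xs @ [(v, \<one>\<^bsub>G v\<^esub>)] @ ys, xs @ ys) | xs v ys.
      wf_word V G (xs @ [(v, \<one>\<^bsub>G v\<^esub>)] @ ys)}"

definition gp_move where
  "gp_move V E G = swap_move V E G \<union> merge_move V G \<union> delete_move V G"

text \<open>Two words represent the same element of the graph product iff they are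
related by the equivalence relation generated by the moves.\<close>
definition gp_equiv :: "'v set \<Rightarrow> ('v \<Rightarrow> 'v \<Rightarrow> bool) \<Rightarrow> ('v \<Rightarrow> 'g monoid)
    \<Rightarrow> (('v \<times> 'g) list \<times> ('v \<times> 'g) list) set" where
  "gp_equiv V E G = {(w, w'). wf_word V G w \<and> wf_word V G w' \<and>
      (w, w') \<in> (gp_move V E G \<union> (gp_move V E G)\<inverse>)\<^sup>*}"

definition gp_elems :: "'v set \<Rightarrow> ('v \<Rightarrow> 'v \<Rightarrow> bool) \<Rightarrow> ('v \<Rightarrow> 'g monoid)
    \<Rightarrow> ('v \<times> 'g) list set set" where
  "gp_elems V E G = {w. wf_word V G w} // gp_equiv V E G"

definition reduced_word :: "'v set \<Rightarrow> ('v \<Rightarrow> 'v \<Rightarrow> bool) \<Rightarrow> ('v \<Rightarrow> 'g monoid)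
    \<Rightarrow> ('v \<times> 'g) list \<Rightarrow> bool" where
  "reduced_word V E G w \<longleftrightarrow> wf_word V G w \<and>
     (\<forall>w'. (w, w') \<in> (swap_move V E G)\<^sup>* \<longrightarrow>
        (\<forall>(v,a)\<in>set w'. a \<noteq> \<one>\<^bsub>G v\<^esub>) \<and>
        (\<forall>xs u a v b ys. w' = xs @ [(u,a),(v,b)] @ ys \<longrightarrow> u \<noteq> v))"

definition d_tail :: "'v set \<Rightarrow> ('v \<Rightarrow> 'v \<Rightarrow> bool) \<Rightarrow> ('v \<Rightarrow> 'g monoid)
    \<Rightarrow> ('v \<times> 'g) list set \<Rightarrow> nat \<Rightarrow> ('v \<times> 'g) set" where
  "d_tail V E G g d = {s. \<exists>w. w \<in> g \<and> reduced_word V E G w \<and>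
       s \<in> set (drop (length w - d) w)}"

definition clique_number :: "'v set \<Rightarrow> ('v \<Rightarrow> 'v \<Rightarrow> bool) \<Rightarrow> nat" where
  "clique_number V E = Max {card C | C. C \<subseteq> V \<and> (\<forall>x\<in>C. \<forall>y\<in>C. x \<noteq> y \<longrightarrow> E x y)}"

end

theory Submission
  imports Defs
begin

text \<open>Reduced words representing the same element differ only by swaps.  This normal form
theorem is proved with van der Waerden's trick: a word acts letter by letter on reduced words,
every move of the graph product changes the result only up to swaps, and acting with a reduced
word on the empty word returns that word up to swaps.

Call a syllable of a reduced word \<open>u\<close> last if some swap-equivalent word ends with it.  Last
syllables have pairwise distinct vertices (cancellation from the right) and these vertices are
pairwise adjacent (two distinct non-adjacent vertices cannot both be moved to the end), so there
are at most \<open>\<kappa>\<close> of them.  Deleting from \<open>u\<close> the last syllable of every such vertex turns each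
syllable of the \<open>(d+1)\<close>-tail that is not a last syllable into a syllable of the \<open>d\<close>-tail of the
shorter word, and induction on \<open>d\<close> gives the bound \<open>d\<kappa>\<close>.\<close>

fun del_first_at :: "'v \<Rightarrow> ('v \<times> 'a) list \<Rightarrow> ('v \<times> 'a) list" where
  "del_first_at v [] = []"
| "del_first_at v (s # r) = (if fst s = v then r else s # del_first_at v r)"

definition del_last_at :: "'v \<Rightarrow> ('v \<times> 'a) list \<Rightarrow> ('v \<times> 'a) list" where
  "del_last_at v w = rev (del_first_at v (rev w))"

definition last_at :: "'v \<Rightarrow> ('v \<times> 'a) list \<Rightarrow> 'a" where
  "last_at v w = snd (last (filter (\<lambda>s. fst s = v) w))"

fun reaches_via_link :: "('v \<Rightarrow> 'v \<Rightarrow> bool) \<Rightarrow> 'v \<Rightarrow> ('v \<times> 'a) list \<Rightarrow> bool" where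
  "reaches_via_link E v [] = False"
| "reaches_via_link E v (s # r) = (fst s = v \<or> (E v (fst s) \<and> reaches_via_link E v r))"

lemma del_first_at_append:
  "del_first_at v (p @ q) = (if \<exists>s\<in>set p. fst s = v then del_first_at v p @ q else p @ del_first_at v q)"
  by (induction p) auto

lemma del_first_at_subset: "set (del_first_at v r) \<subseteq> set r"
  by (induction r) auto

lemma del_last_at_subset: "set (del_last_at v w) \<subseteq> set w"
  unfolding del_last_at_def using del_first_at_subset by fastforce

lemma del_last_at_append:
  "del_last_at v (p @ q) = (if \<exists>s\<in>set q. fst s = v then p @ del_last_at v q else del_last_at v p @ q)"
  unfolding del_last_at_def by (auto simp: del_first_at_append)

lemma del_last_at_snoc_same [simp]: "del_last_at v (x @ [(v,c)]) = x"
  unfolding del_last_at_def by simp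

lemma del_last_at_snoc_other: "u \<noteq> v \<Longrightarrow> del_last_at v (x @ [(u,c)]) = del_last_at v x @ [(u,c)]"
  unfolding del_last_at_def by simp

lemma last_at_snoc_same [simp]: "last_at v (x @ [(v,c)]) = c"
  unfolding last_at_def by simp

lemma reaches_via_link_append:
  "reaches_via_link E v (p @ q) \<longleftrightarrow>
     reaches_via_link E v p \<or> (\<forall>s\<in>set p. E v (fst s)) \<and> reaches_via_link E v q"
  by (induction p) auto

fun del_first_of :: "'v set \<Rightarrow> ('v \<times> 'a) list \<Rightarrow> ('v \<times> 'a) list" where
  "del_first_of S [] = []"
| "del_first_of S (s # r) =
     (if fst s \<in> S then del_first_of (S - {fst s}) r else s # del_first_of S r)"

definition del_last_of :: "'v set \<Rightarrow> ('v \<times> 'a) list \<Rightarrow> ('v \<times> 'a) list" where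
  "del_last_of S w = rev (del_first_of S (rev w))"

lemma del_first_of_append:
  "del_first_of S (p @ q) = del_first_of S p @ del_first_of (S - fst ` set p) q"
proof (induction p arbitrary: S)
  case (Cons s p)
  show ?case
  proof (cases "fst s \<in> S")
    case True
    then show ?thesis
      using Cons[of "S - {fst s}"] by (simp add: Diff_insert2[symmetric] insert_commute)
  next
    case False
    then have "S - insert (fst s) (fst ` set p) = S - fst ` set p" by blast
    then show ?thesis using Cons[of S] False by simp
  qed
qed simp

lemma del_first_of_subset: "set (del_first_of S r) \<subseteq> set r"
  by (induction r arbitrary: S) auto

lemma length_del_first_of: "length (del_first_of S r) \<le> length r"
  by (induction r arbitrary: S) (auto simp: le_SucI)

lemma del_first_of_mem:
  assumes "s \<in> set r"
  shows "s \<in> set (del_first_of S r) \<or> fst s \<in> S \<and> s = hd (filter (\<lambda>t. fst t = fst s) r)"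
  using assms by (induction r arbitrary: S) (auto split: if_splits)

lemma set_suffix_subset_drop:
  assumes "length q \<le> d"
  shows "set q \<subseteq> set (drop (length (p @ q) - d) (p @ q))"
proof -
  have "length (p @ q) - d \<le> length p" using assms by simp
  then show ?thesis by simp
qed

lemma del_last_of_append:
  "del_last_of S (p @ q) = del_last_of (S - fst ` set q) p @ del_last_of S q"
  unfolding del_last_of_def by (simp add: del_first_of_append)

lemma del_last_of_subset: "set (del_last_of S w) \<subseteq> set w"
  unfolding del_last_of_def using del_first_of_subset by fastforce

lemma suffix_del_last_of:
  assumes s: "s \<in> set (drop (length w - Suc d) w)" and S: "fst (last w) \<in> S"
  shows "s \<in> set (drop (length (del_last_of S w) - d) (del_last_of S w))
    \<or> fst s \<in> S \<and> s = last (filter (\<lambda>t. fst t = fst s) w)"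
proof -
  define p where "p = take (length w - Suc d) w"
  define q where "q = drop (length w - Suc d) w"
  have w: "w = p @ q" and q: "length q \<le> Suc d" "s \<in> set q"
    using s unfolding p_def q_def by auto
  then have "last q = last w" by (metis empty_iff empty_set last_appendR)
  then obtain q0 where q0: "rev q = last w # q0" "length q0 \<le> d"
    using q by (cases "rev q") auto
  define q' where "q' = rev (del_first_of S (rev q))"
  have "length q' \<le> d"
    using q0 S length_del_first_of[of "S - {fst (last w)}" q0] unfolding q'_def by simp
  then have suffix: "set q' \<subseteq> set (drop (length (del_last_of S w) - d) (del_last_of S w))"
    using set_suffix_subset_drop[of q' d] unfolding w del_last_of_def q'_def
    by (simp add: del_first_of_append)
  have "s \<in> set (rev q)" using q by simp
  from del_first_of_mem[OF this, of S] show ?thesis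
  proof
    assume "s \<in> set (del_first_of S (rev q))"
    then show ?thesis using suffix unfolding q'_def by auto
  next
    let ?P = "\<lambda>t. fst t = fst s"
    assume last: "fst s \<in> S \<and> s = hd (filter ?P (rev q))"
    have "filter ?P (rev q) \<noteq> []" using q by (simp add: filter_empty_conv) blast
    then have "hd (filter ?P (rev q)) = last (filter ?P w)"
      unfolding w by (simp add: rev_filter[symmetric] hd_rev)
    then show ?thesis using last by simp
  qed
qed

definition clique :: "('v \<Rightarrow> 'v \<Rightarrow> bool) \<Rightarrow> 'v set \<Rightarrow> bool" where
  "clique E C \<longleftrightarrow> (\<forall>x\<in>C. \<forall>y\<in>C. x \<noteq> y \<longrightarrow> E x y)"

lemma card_clique_le_clique_number:
  assumes "finite V" "C \<subseteq> V" "clique E C"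
  shows "card C \<le> clique_number V E"
proof -
  have "finite {card C | C. C \<subseteq> V \<and> clique E C}"
    using assms(1) by (auto intro: finite_subset[of _ "card ` Pow V"])
  then show ?thesis
    using assms(2,3) unfolding clique_number_def clique_def by (auto intro: Max_ge)
qed

section \<open>Swap equivalence\<close>

locale graph_product =
  fixes V :: "'v set" and E :: "'v \<Rightarrow> 'v \<Rightarrow> bool" and G :: "'v \<Rightarrow> 'g monoid"
  assumes adj_sym: "E u v \<Longrightarrow> E v u" and adj_irrefl: "\<not> E v v"
    and vertex_group: "v \<in> V \<Longrightarrow> group (G v)"
begin

abbreviation wf :: "('v \<times> 'g) list \<Rightarrow> bool" where "wf \<equiv> wf_word V G"

abbreviation swap_equiv :: "('v \<times> 'g) list \<Rightarrow> ('v \<times> 'g) list \<Rightarrow> bool" (infix "\<approx>" 50)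
  where "w \<approx> w' \<equiv> (w, w') \<in> (swap_move V E G)\<^sup>*"

lemma wf_append [simp]: "wf (xs @ ys) \<longleftrightarrow> wf xs \<and> wf ys"
  unfolding wf_word_def by auto

lemma wf_Cons [simp]: "wf ((v,a) # ys) \<longleftrightarrow> v \<in> V \<and> a \<in> carrier (G v) \<and> wf ys"
  unfolding wf_word_def by auto

lemma wf_Nil [simp]: "wf []"
  unfolding wf_word_def by auto

lemma wf_subset: "wf w \<Longrightarrow> set w' \<subseteq> set w \<Longrightarrow> wf w'"
  unfolding wf_word_def by auto

lemma swap_move_iff:
  "(w, w') \<in> swap_move V E G \<longleftrightarrow> (\<exists>xs u a v b ys. w = xs @ [(u,a),(v,b)] @ ys \<and>
     w' = xs @ [(v,b),(u,a)] @ ys \<and> wf w \<and> E u v)"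
  unfolding swap_move_def by blast

lemma swap_move_sym: "(w, w') \<in> swap_move V E G \<Longrightarrow> (w', w) \<in> swap_move V E G"
  unfolding swap_move_iff by (fastforce simp: adj_sym)

lemma swap_equiv_swap:
  "wf (xs @ [(u,a),(v,b)] @ ys) \<Longrightarrow> E u v \<Longrightarrow> xs @ [(u,a),(v,b)] @ ys \<approx> xs @ [(v,b),(u,a)] @ ys"
  unfolding swap_move_def by blast

lemma swap_equiv_sym: "w \<approx> w' \<Longrightarrow> w' \<approx> w"
  by (induction rule: rtrancl_induct) (auto intro: converse_rtrancl_into_rtrancl swap_move_sym)

lemma swap_equiv_trans: "w \<approx> w' \<Longrightarrow> w' \<approx> w'' \<Longrightarrow> w \<approx> w''"
  by (rule rtrancl_trans)

lemma swap_equiv_invariant: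
  assumes "\<And>w w'. (w, w') \<in> swap_move V E G \<Longrightarrow> f w = f w'"
  shows "w \<approx> w' \<Longrightarrow> f w = f w'"
  by (induction rule: rtrancl_induct) (auto dest: assms)

lemma swap_equiv_map:
  assumes "\<And>w w'. (w, w') \<in> swap_move V E G \<Longrightarrow> f w \<approx> f w'"
  shows "w \<approx> w' \<Longrightarrow> f w \<approx> f w'"
  by (induction rule: rtrancl_induct) (auto dest: assms intro: rtrancl_trans)

lemma swap_equiv_set: "w \<approx> w' \<Longrightarrow> set w' = set w"
  by (rule sym, rule swap_equiv_invariant) (auto simp: swap_move_iff)

lemma swap_equiv_wf: "w \<approx> w' \<Longrightarrow> wf w' \<longleftrightarrow> wf w"
  using swap_equiv_set[of w w'] unfolding wf_word_def by simp

lemma swap_equiv_append: "x \<approx> x' \<Longrightarrow> wf t \<Longrightarrow> x @ t \<approx> x' @ t"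
  by (rule swap_equiv_map[where f = "\<lambda>x. x @ t"])
    (auto simp: swap_move_iff intro!: swap_equiv_swap[of _ _ _ _ _ "_ @ t", simplified])

lemma filter_swap_equiv:
  assumes "\<And>u v. u \<in> S \<Longrightarrow> v \<in> S \<Longrightarrow> \<not> E u v" and "w \<approx> w'"
  shows "filter (\<lambda>s. fst s \<in> S) w = filter (\<lambda>s. fst s \<in> S) w'"
  by (rule swap_equiv_invariant[OF _ assms(2)]) (auto simp: swap_move_iff dest: assms(1))

text \<open>\<open>terminal v w\<close> holds iff some word swap-equivalent to \<open>w\<close> ends with a syllable at \<open>v\<close>
(\<open>terminal_swap_to_end\<close>, \<open>swap_to_end_terminal\<close>).\<close>

definition terminal :: "'v \<Rightarrow> ('v \<times> 'g) list \<Rightarrow> bool" where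
  "terminal v w \<longleftrightarrow> reaches_via_link E v (rev w)"

lemma terminal_snoc_same [simp]: "terminal v (x @ [(v,c)])"
  unfolding terminal_def by simp

lemma terminal_snoc_other: "u \<noteq> v \<Longrightarrow> terminal v (x @ [(u,c)]) \<longleftrightarrow> E v u \<and> terminal v x"
  unfolding terminal_def by simp

lemma terminal_swap_equiv: "w \<approx> w' \<Longrightarrow> terminal v w \<longleftrightarrow> terminal v w'"
  by (rule swap_equiv_invariant)
    (auto simp: swap_move_iff terminal_def reaches_via_link_append adj_irrefl dest: adj_sym)

lemma swap_to_end_terminal: "w \<approx> x @ [(v,b)] \<Longrightarrow> terminal v w"
  using terminal_swap_equiv by fastforce

lemma last_at_swap_equiv: "w \<approx> w' \<Longrightarrow> last_at v w = last_at v w'"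
  unfolding last_at_def using filter_swap_equiv[of "{v}" w w'] adj_irrefl by auto

lemma del_last_at_swap_move:
  assumes "(w, w') \<in> swap_move V E G"
  shows "del_last_at v w \<approx> del_last_at v w'"
proof -
  from assms obtain xs u a u' b ys where w: "w = xs @ [(u,a),(u',b)] @ ys"
    and w': "w' = xs @ [(u',b),(u,a)] @ ys" and wfw: "wf w" and E: "E u u'"
    unfolding swap_move_iff by blast
  have "u \<noteq> u'" using E adj_irrefl by auto
  consider (in_ys) "\<exists>s\<in>set ys. fst s = v"
    | (in_pair) "v \<in> {u, u'}" "\<forall>s\<in>set ys. fst s \<noteq> v"
    | (in_xs) "v \<notin> {u, u'}" "\<forall>s\<in>set ys. fst s \<noteq> v"
    by blast
  then show ?thesis
  proof cases
    case in_ys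
    then have "del_last_at v w = xs @ [(u,a),(u',b)] @ del_last_at v ys"
      "del_last_at v w' = xs @ [(u',b),(u,a)] @ del_last_at v ys"
      unfolding w w' del_last_at_def by (auto simp: del_first_at_append)
    moreover have "wf (xs @ [(u,a),(u',b)] @ del_last_at v ys)"
      using wfw w del_last_at_subset[of v ys] wf_subset by auto
    ultimately show ?thesis using swap_equiv_swap E by metis
  next
    case in_pair
    then have "del_last_at v w = del_last_at v w'"
      using \<open>u \<noteq> u'\<close> unfolding w w' del_last_at_def by (auto simp: del_first_at_append)
    then show ?thesis by simp
  next
    case in_xs
    then have "del_last_at v w = del_last_at v xs @ [(u,a),(u',b)] @ ys"
      "del_last_at v w' = del_last_at v xs @ [(u',b),(u,a)] @ ys"
      unfolding w w' del_last_at_def by (auto simp: del_first_at_append)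
    moreover have "wf (del_last_at v xs @ [(u,a),(u',b)] @ ys)"
      using wfw w del_last_at_subset[of v xs] wf_subset by auto
    ultimately show ?thesis using swap_equiv_swap E by metis
  qed
qed

lemma del_last_at_swap_equiv: "w \<approx> w' \<Longrightarrow> del_last_at v w \<approx> del_last_at v w'"
  using swap_equiv_map[of "del_last_at v"] del_last_at_swap_move by blast

lemma swap_equiv_snoc_same_vertex:
  assumes "x @ [(v,b)] \<approx> y @ [(v,c)]"
  shows "b = c \<and> x \<approx> y"
  using last_at_swap_equiv[OF assms, of v] del_last_at_swap_equiv[OF assms, of v] by simp

lemma swap_equiv_snoc_distinct:
  assumes "x @ [(u,c)] \<approx> y @ [(v,e)]" "u \<noteq> v" "wf (x @ [(u,c)])"
  shows "x \<approx> del_last_at u y @ [(v,e)] \<and> y \<approx> del_last_at u y @ [(u,c)]"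
proof
  show x: "x \<approx> del_last_at u y @ [(v,e)]"
    using del_last_at_swap_equiv[OF assms(1), of u] assms(2) by (simp add: del_last_at_snoc_other)
  have "del_last_at v x @ [(u,c)] \<approx> del_last_at u y @ [(u,c)]"
    using swap_equiv_append[OF del_last_at_swap_equiv[OF x, of v]] assms(3) by simp
  moreover have "del_last_at v x @ [(u,c)] \<approx> y"
    using del_last_at_swap_equiv[OF assms(1), of v] assms(2) by (simp add: del_last_at_snoc_other)
  ultimately show "y \<approx> del_last_at u y @ [(u,c)]"
    by (metis swap_equiv_sym swap_equiv_trans)
qed

lemma reaches_via_link_swap_to_end:
  assumes "reaches_via_link E v r" "wf (rev r)"
  shows "rev r \<approx> rev (del_first_at v r) @ [(v, snd (hd (filter (\<lambda>s. fst s = v) r)))]"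
  using assms
proof (induction r)
  case (Cons s r)
  obtain u a where s: "s = (u,a)" by force
  show ?case
  proof (cases "u = v")
    case False
    let ?b = "snd (hd (filter (\<lambda>s. fst s = v) r))"
    have E: "E v u" and r: "reaches_via_link E v r" "wf (rev r)" "wf [s]"
      using Cons.prems s False by auto
    have IH: "rev r \<approx> rev (del_first_at v r) @ [(v, ?b)]"
      using Cons.IH r by blast
    have "rev r @ [s] \<approx> rev (del_first_at v r) @ [(v, ?b)] @ [(u,a)]"
      using swap_equiv_append[OF IH r(3)] s by simp
    moreover have "wf (rev (del_first_at v r) @ [(v, ?b), (u,a)] @ [])"
      using swap_equiv_wf[OF IH] r s by simp
    then have "rev (del_first_at v r) @ [(v, ?b), (u,a)] @ [] \<approx>
        rev (del_first_at v r) @ [(u,a), (v, ?b)] @ []"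
      using swap_equiv_swap E by blast
    ultimately show ?thesis using s False by (auto intro: swap_equiv_trans)
  qed (use s in simp)
qed simp

lemma terminal_swap_to_end:
  assumes "terminal v w" "wf w"
  shows "w \<approx> del_last_at v w @ [(v, last_at v w)]"
  using reaches_via_link_swap_to_end[of v "rev w"] assms
  unfolding del_last_at_def last_at_def terminal_def by (simp add: rev_filter[symmetric] hd_rev)

lemma two_ends_swap_equiv:
  assumes "wf u" "u \<approx> x1 @ [(v1,c1)]" "u \<approx> x2 @ [(v2,c2)]" "v1 \<noteq> v2"
  obtains z where "u \<approx> z @ [(v2,c2),(v1,c1)]" "u \<approx> z @ [(v1,c1),(v2,c2)]"
proof -
  have wf1: "wf (x1 @ [(v1,c1)])" and wf2: "wf (x2 @ [(v2,c2)])"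
    using assms(1-3) swap_equiv_wf by blast+
  have "x1 @ [(v1,c1)] \<approx> x2 @ [(v2,c2)]"
    using assms(2,3) swap_equiv_sym swap_equiv_trans by blast
  from swap_equiv_snoc_distinct[OF this assms(4) wf1]
  obtain z where "x1 \<approx> z @ [(v2,c2)]" "x2 \<approx> z @ [(v1,c1)]" by blast
  from swap_equiv_append[OF this(1), of "[(v1,c1)]"] swap_equiv_append[OF this(2), of "[(v2,c2)]"]
  have "x1 @ [(v1,c1)] \<approx> z @ [(v2,c2),(v1,c1)]" "x2 @ [(v2,c2)] \<approx> z @ [(v1,c1),(v2,c2)]"
    using wf1 wf2 by simp_all
  then show thesis using that assms(2,3) swap_equiv_trans by blast
qed

lemma two_ends_adjacent:
  assumes "wf u" "u \<approx> x1 @ [(v1,c1)]" "u \<approx> x2 @ [(v2,c2)]" "v1 \<noteq> v2"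
  shows "E v1 v2"
proof (rule ccontr)
  assume "\<not> E v1 v2"
  then have "\<And>x y. x \<in> {v1,v2} \<Longrightarrow> y \<in> {v1,v2} \<Longrightarrow> \<not> E x y"
    using adj_irrefl adj_sym by blast
  moreover obtain z where "u \<approx> z @ [(v2,c2),(v1,c1)]" "u \<approx> z @ [(v1,c1),(v2,c2)]"
    using two_ends_swap_equiv[OF assms] .
  then have "z @ [(v2,c2),(v1,c1)] \<approx> z @ [(v1,c1),(v2,c2)]"
    using swap_equiv_sym swap_equiv_trans by blast
  ultimately have "filter (\<lambda>s. fst s \<in> {v1,v2}) (z @ [(v2,c2),(v1,c1)]) =
      filter (\<lambda>s. fst s \<in> {v1,v2}) (z @ [(v1,c1),(v2,c2)])"
    by (rule filter_swap_equiv)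
  then show False using assms(4) by simp
qed

section \<open>Reduced words\<close>

definition mergeable :: "('v \<times> 'g) list \<Rightarrow> bool" where
  "mergeable w \<longleftrightarrow> (\<exists>y z v c b. w \<approx> y @ [(v,c),(v,b)] @ z)"

definition reduced :: "('v \<times> 'g) list \<Rightarrow> bool" where
  "reduced w \<longleftrightarrow> wf w \<and> (\<forall>(v,a)\<in>set w. a \<noteq> \<one>\<^bsub>G v\<^esub>) \<and> \<not> mergeable w"

lemma reduced_word_iff: "reduced_word V E G w \<longleftrightarrow> reduced w"
proof
  assume r: "reduced_word V E G w"
  have "\<not> mergeable w"
  proof
    assume "mergeable w"
    then obtain y z v c b where "w \<approx> y @ [(v,c),(v,b)] @ z"
      unfolding mergeable_def by blast
    with r have "\<forall>xs u a' v' b' ys. y @ [(v,c),(v,b)] @ z = xs @ [(u,a'),(v',b')] @ ys \<longrightarrow> u \<noteq> v'"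
      unfolding reduced_word_def by blast
    from this[rule_format, of y v c v b z] show False by simp
  qed
  moreover have "\<forall>(v,a)\<in>set w. a \<noteq> \<one>\<^bsub>G v\<^esub>"
    using r unfolding reduced_word_def by blast
  ultimately show "reduced w"
    using r unfolding reduced_word_def reduced_def by blast
next
  assume r: "reduced w"
  have "(\<forall>(v,a)\<in>set w'. a \<noteq> \<one>\<^bsub>G v\<^esub>) \<and>
      (\<forall>xs u a v b ys. w' = xs @ [(u,a),(v,b)] @ ys \<longrightarrow> u \<noteq> v)" if "w \<approx> w'" for w'
  proof
    show "\<forall>(v,a)\<in>set w'. a \<noteq> \<one>\<^bsub>G v\<^esub>"
      using r swap_equiv_set[OF that] unfolding reduced_def by simp
    show "\<forall>xs u a v b ys. w' = xs @ [(u,a),(v,b)] @ ys \<longrightarrow> u \<noteq> v"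
      using r that unfolding reduced_def mergeable_def by blast
  qed
  then show "reduced_word V E G w"
    using r unfolding reduced_word_def reduced_def by blast
qed

lemma mergeable_swap_equiv: "w \<approx> w' \<Longrightarrow> mergeable w' \<Longrightarrow> mergeable w"
  unfolding mergeable_def by (meson swap_equiv_trans)

lemma reduced_swap_equiv:
  assumes "reduced w" "w \<approx> w'"
  shows "reduced w'"
  using assms(1) swap_equiv_set[OF assms(2)] mergeable_swap_equiv[OF assms(2)]
  unfolding reduced_def wf_word_def by auto

lemma mergeable_append: "mergeable x \<Longrightarrow> wf t \<Longrightarrow> mergeable (x @ t)"
  unfolding mergeable_def using swap_equiv_append by fastforce

lemma terminal_snoc_mergeable:
  assumes "wf (x @ [(v,c)])" "terminal v x"
  shows "mergeable (x @ [(v,c)])"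
proof -
  have "x \<approx> del_last_at v x @ [(v, last_at v x)]"
    using terminal_swap_to_end assms by auto
  from swap_equiv_append[OF this, of "[(v,c)]"]
  have "x @ [(v,c)] \<approx> del_last_at v x @ [(v, last_at v x), (v,c)] @ []"
    using assms(1) by simp
  then show ?thesis unfolding mergeable_def by blast
qed

text \<open>Conversely, a merge in \<open>x @ [(v,c)]\<close> either takes place inside \<open>x\<close> or involves the
last syllable, which can only meet a syllable at \<open>v\<close> that is terminal in \<open>x\<close>.\<close>

lemma mergeable_snocD:
  assumes "x @ [(v,c)] \<approx> y @ [(v',d),(v',d')] @ z"
  shows "mergeable x \<or> terminal v x"
proof -
  let ?W = "y @ [(v',d),(v',d')] @ z"
  have x: "x \<approx> del_last_at v ?W" using del_last_at_swap_equiv[OF assms, of v] by simp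
  have W: "terminal v ?W" using terminal_swap_equiv[OF assms, of v] by simp
  consider (in_z) "\<exists>s\<in>set z. fst s = v" | (in_pair) "v' = v" "\<forall>s\<in>set z. fst s \<noteq> v"
    | (in_y) "v' \<noteq> v" "\<forall>s\<in>set z. fst s \<noteq> v"
    by blast
  then show ?thesis
  proof cases
    case in_z
    then have "del_last_at v ?W = y @ [(v',d),(v',d')] @ del_last_at v z"
      using del_last_at_append[of v "y @ [(v',d),(v',d')]" z] by simp
    then have "x \<approx> y @ [(v',d),(v',d')] @ del_last_at v z" using x by simp
    then show ?thesis unfolding mergeable_def by blast
  next
    case in_pair
    then have "del_last_at v ?W = y @ [(v,d)] @ z"
      using del_last_at_append[of v "y @ [(v',d),(v',d')]" z]
        del_last_at_snoc_same[of v "y @ [(v,d)]" d'] by auto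
    moreover have "terminal v (y @ [(v,d)] @ z)"
      using W in_pair unfolding terminal_def by (simp add: reaches_via_link_append)
    ultimately show ?thesis using terminal_swap_equiv[OF x] by simp
  next
    case in_y
    then have "del_last_at v ?W = del_last_at v y @ [(v',d),(v',d')] @ z"
      using del_last_at_append[of v "y @ [(v',d),(v',d')]" z]
        del_last_at_append[of v y "[(v',d),(v',d')]"]
      by (simp add: del_last_at_snoc_other)
    then have "x \<approx> del_last_at v y @ [(v',d),(v',d')] @ z" using x by simp
    then show ?thesis unfolding mergeable_def by blast
  qed
qed

lemma reduced_snoc_iff:
  "reduced (x @ [(v,c)]) \<longleftrightarrow>
     reduced x \<and> \<not> terminal v x \<and> v \<in> V \<and> c \<in> carrier (G v) \<and> c \<noteq> \<one>\<^bsub>G v\<^esub>"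
proof
  assume r: "reduced (x @ [(v,c)])"
  then have wf: "wf (x @ [(v,c)])" and "\<not> mergeable (x @ [(v,c)])"
    unfolding reduced_def by auto
  then have "\<not> terminal v x" "\<not> mergeable x"
    using terminal_snoc_mergeable[OF wf] mergeable_append[of x "[(v,c)]"] by auto
  then show "reduced x \<and> \<not> terminal v x \<and> v \<in> V \<and> c \<in> carrier (G v) \<and> c \<noteq> \<one>\<^bsub>G v\<^esub>"
    using r unfolding reduced_def by auto
next
  assume a: "reduced x \<and> \<not> terminal v x \<and> v \<in> V \<and> c \<in> carrier (G v) \<and> c \<noteq> \<one>\<^bsub>G v\<^esub>"
  have "\<not> mergeable (x @ [(v,c)])"
  proof
    assume "mergeable (x @ [(v,c)])"
    then obtain y z v' d d' where "x @ [(v,c)] \<approx> y @ [(v',d),(v',d')] @ z"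
      unfolding mergeable_def by blast
    then have "mergeable x \<or> terminal v x" by (rule mergeable_snocD)
    then show False using a unfolding reduced_def by blast
  qed
  then show "reduced (x @ [(v,c)])" using a unfolding reduced_def by auto
qed

lemma reduced_Nil: "reduced []"
  unfolding reduced_def mergeable_def using swap_equiv_set by fastforce

lemma reduced_terminal:
  assumes "reduced u" "terminal v u"
  shows "u \<approx> del_last_at v u @ [(v, last_at v u)]"
    and "reduced (del_last_at v u @ [(v, last_at v u)])"
proof -
  show u: "u \<approx> del_last_at v u @ [(v, last_at v u)]"
    using assms terminal_swap_to_end unfolding reduced_def by blast
  show "reduced (del_last_at v u @ [(v, last_at v u)])"
    using reduced_swap_equiv[OF assms(1) u] .
qed

section \<open>The action of syllables on reduced words\<close>

definition snoc_syl :: "'v \<Rightarrow> 'g \<Rightarrow> ('v \<times> 'g) list \<Rightarrow> ('v \<times> 'g) list" where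
  "snoc_syl v c x = (if c = \<one>\<^bsub>G v\<^esub> then x else x @ [(v,c)])"

text \<open>For reduced \<open>u\<close>, \<open>act u v a\<close> is a reduced word for the product of \<open>u\<close> and the
syllable \<open>(v,a)\<close>.\<close>

definition act :: "('v \<times> 'g) list \<Rightarrow> 'v \<Rightarrow> 'g \<Rightarrow> ('v \<times> 'g) list" where
  "act u v a = (if terminal v u
     then snoc_syl v (last_at v u \<otimes>\<^bsub>G v\<^esub> a) (del_last_at v u) else snoc_syl v a u)"

lemma act_snoc_same: "act (x @ [(v,c)]) v a = snoc_syl v (c \<otimes>\<^bsub>G v\<^esub> a) x"
  unfolding act_def by simp

lemma act_not_terminal: "\<not> terminal v u \<Longrightarrow> act u v a = snoc_syl v a u"
  unfolding act_def by simp

lemma terminal_last_at: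
  assumes "terminal v w" "wf w"
  shows "v \<in> V" "last_at v w \<in> carrier (G v)"
  using swap_equiv_wf[OF terminal_swap_to_end[OF assms]] assms(2) by auto

lemma wf_snoc_syl: "wf x \<Longrightarrow> v \<in> V \<Longrightarrow> c \<in> carrier (G v) \<Longrightarrow> wf (snoc_syl v c x)"
  unfolding snoc_syl_def by auto

lemma wf_act:
  assumes "wf u" "v \<in> V" "a \<in> carrier (G v)"
  shows "wf (act u v a)"
proof -
  interpret group "G v" using vertex_group assms(2) .
  show ?thesis
    unfolding act_def using assms terminal_last_at[of v u] wf_subset[OF _ del_last_at_subset]
    by (auto intro!: wf_snoc_syl)
qed

lemma snoc_syl_swap_equiv:
  "x \<approx> x' \<Longrightarrow> v \<in> V \<Longrightarrow> c \<in> carrier (G v) \<Longrightarrow> snoc_syl v c x \<approx> snoc_syl v c x'"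
  unfolding snoc_syl_def using swap_equiv_append[of x x' "[(v,c)]"] by auto

lemma act_swap_equiv:
  assumes "wf u" "u \<approx> u'" "v \<in> V" "a \<in> carrier (G v)"
  shows "act u v a \<approx> act u' v a"
proof (cases "terminal v u")
  case True
  interpret group "G v" using vertex_group assms(3) .
  have "terminal v u'" "last_at v u' = last_at v u" "del_last_at v u \<approx> del_last_at v u'"
    using True terminal_swap_equiv last_at_swap_equiv del_last_at_swap_equiv assms(2) by metis+
  then show ?thesis
    unfolding act_def using True snoc_syl_swap_equiv terminal_last_at[OF True assms(1)] assms
    by auto
next
  case False
  then have "\<not> terminal v u'" using terminal_swap_equiv assms(2) by blast
  then show ?thesis unfolding act_def using False snoc_syl_swap_equiv assms by auto
qed

lemma act_swap_equiv_snoc: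
  assumes "wf u" "u \<approx> x @ [(v,c)]" "v \<in> V" "a \<in> carrier (G v)"
  shows "act u v a \<approx> snoc_syl v (c \<otimes>\<^bsub>G v\<^esub> a) x"
  using act_swap_equiv[OF assms] act_snoc_same by simp

lemma reduced_snoc_syl:
  "reduced x \<Longrightarrow> \<not> terminal v x \<Longrightarrow> v \<in> V \<Longrightarrow> c \<in> carrier (G v) \<Longrightarrow> reduced (snoc_syl v c x)"
  unfolding snoc_syl_def by (simp add: reduced_snoc_iff)

lemma reduced_terminal_parts:
  assumes "reduced u" "terminal v u"
  shows "reduced (del_last_at v u)" "\<not> terminal v (del_last_at v u)"
    and "last_at v u \<in> carrier (G v)" "last_at v u \<noteq> \<one>\<^bsub>G v\<^esub>"
  using reduced_terminal(2)[OF assms] by (simp_all add: reduced_snoc_iff)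

lemma reduced_act:
  assumes r: "reduced u" and v: "v \<in> V" and a: "a \<in> carrier (G v)"
  shows "reduced (act u v a)"
proof (cases "terminal v u")
  case True
  interpret group "G v" using vertex_group v .
  show ?thesis
    using True reduced_terminal_parts[OF r True] v a by (simp add: act_def reduced_snoc_syl)
next
  case False
  then show ?thesis using r v a by (simp add: act_not_terminal reduced_snoc_syl)
qed

lemma act_merge:
  assumes r: "reduced u" and v: "v \<in> V" and a: "a \<in> carrier (G v)" and b: "b \<in> carrier (G v)"
  shows "act (act u v a) v b = act u v (a \<otimes>\<^bsub>G v\<^esub> b)"
proof -
  interpret group "G v" using vertex_group v .
  show ?thesis
  proof (cases "terminal v u")
    case True
    let ?x = "del_last_at v u" and ?c = "last_at v u"
    have x: "\<not> terminal v ?x" and c: "?c \<in> carrier (G v)"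
      using reduced_terminal_parts[OF r True] by auto
    have "act u v a = snoc_syl v (?c \<otimes>\<^bsub>G v\<^esub> a) ?x"
      "act u v (a \<otimes>\<^bsub>G v\<^esub> b) = snoc_syl v (?c \<otimes>\<^bsub>G v\<^esub> (a \<otimes>\<^bsub>G v\<^esub> b)) ?x"
      using True unfolding act_def by simp_all
    moreover have "?c \<otimes>\<^bsub>G v\<^esub> a = \<one>\<^bsub>G v\<^esub> \<Longrightarrow> ?c \<otimes>\<^bsub>G v\<^esub> (a \<otimes>\<^bsub>G v\<^esub> b) = b"
      using a b c by (metis l_one m_assoc)
    ultimately show ?thesis
      using act_not_terminal[OF x] act_snoc_same a b c by (auto simp: snoc_syl_def m_assoc)
  next
    case False
    then show ?thesis using b act_snoc_same by (simp add: act_not_terminal snoc_syl_def)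
  qed
qed

lemma act_one:
  assumes r: "reduced u" and v: "v \<in> V"
  shows "act u v \<one>\<^bsub>G v\<^esub> \<approx> u"
proof (cases "terminal v u")
  case True
  interpret group "G v" using vertex_group v .
  show ?thesis
    using True reduced_terminal_parts[OF r True] reduced_terminal(1)[OF r True]
    by (simp add: act_def snoc_syl_def swap_equiv_sym)
next
  case False
  then show ?thesis by (simp add: act_not_terminal snoc_syl_def)
qed

lemma terminal_snoc_syl: "v \<noteq> v' \<Longrightarrow> E v v' \<Longrightarrow> terminal v (snoc_syl v' c x) \<longleftrightarrow> terminal v x"
  unfolding snoc_syl_def by (simp add: terminal_snoc_other)

lemma snoc_syl_commute:
  assumes "E v1 v2" "wf x" "v1 \<in> V" "v2 \<in> V" "a \<in> carrier (G v1)" "b \<in> carrier (G v2)"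
  shows "snoc_syl v2 b (snoc_syl v1 a x) \<approx> snoc_syl v1 a (snoc_syl v2 b x)"
proof -
  have "x @ [(v1,a),(v2,b)] @ [] \<approx> x @ [(v2,b),(v1,a)] @ []"
    using swap_equiv_swap assms by simp
  then show ?thesis unfolding snoc_syl_def by auto
qed

lemma snoc_syl_snoc_commute:
  assumes "E v1 v2" "wf x" "v1 \<in> V" "v2 \<in> V" "c \<in> carrier (G v1)" "b \<in> carrier (G v2)"
  shows "snoc_syl v2 b (x @ [(v1,c)]) \<approx> snoc_syl v2 b x @ [(v1,c)]"
proof -
  have "x @ [(v1,c),(v2,b)] @ [] \<approx> x @ [(v2,b),(v1,c)] @ []"
    using swap_equiv_swap assms by simp
  then show ?thesis unfolding snoc_syl_def by auto
qed

lemma act_act_two_ends: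
  assumes wfu: "wf u" and u: "u \<approx> z @ [(v2,c2),(v1,c1)]" and E: "E v1 v2"
    and v: "v1 \<in> V" "v2 \<in> V" and a: "a \<in> carrier (G v1)" and b: "b \<in> carrier (G v2)"
  shows "act (act u v1 a) v2 b \<approx> snoc_syl v2 (c2 \<otimes>\<^bsub>G v2\<^esub> b) (snoc_syl v1 (c1 \<otimes>\<^bsub>G v1\<^esub> a) z)"
proof -
  interpret group "G v1" using vertex_group v(1) .
  have c: "c1 \<in> carrier (G v1)" "c2 \<in> carrier (G v2)" "wf z"
    using swap_equiv_wf[OF u] wfu by auto
  have "act u v1 a \<approx> snoc_syl v1 (c1 \<otimes>\<^bsub>G v1\<^esub> a) (z @ [(v2,c2)])"
    using act_swap_equiv_snoc[OF wfu _ v(1) a, of "z @ [(v2,c2)]" c1] u by simp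
  moreover have "snoc_syl v1 (c1 \<otimes>\<^bsub>G v1\<^esub> a) (z @ [(v2,c2)]) \<approx>
      snoc_syl v1 (c1 \<otimes>\<^bsub>G v1\<^esub> a) z @ [(v2,c2)]"
    using snoc_syl_snoc_commute[OF adj_sym[OF E] c(3) v(2) v(1) c(2)] c a by simp
  ultimately show ?thesis
    using act_swap_equiv_snoc[OF wf_act[OF wfu v(1) a] _ v(2) b] swap_equiv_trans by blast
qed

lemma act_swap_both_terminal:
  assumes wfu: "wf u" and t: "terminal v1 u" "terminal v2 u" and E: "E v1 v2"
    and v: "v1 \<in> V" "v2 \<in> V" and a: "a \<in> carrier (G v1)" and b: "b \<in> carrier (G v2)"
  shows "act (act u v1 a) v2 b \<approx> act (act u v2 b) v1 a"
proof -
  interpret g1: group "G v1" using vertex_group v(1) .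
  interpret g2: group "G v2" using vertex_group v(2) .
  let ?c1 = "last_at v1 u" and ?c2 = "last_at v2 u"
  have "v1 \<noteq> v2" using E adj_irrefl by auto
  then obtain z where u: "u \<approx> z @ [(v2,?c2),(v1,?c1)]" "u \<approx> z @ [(v1,?c1),(v2,?c2)]"
    using two_ends_swap_equiv[OF wfu terminal_swap_to_end[OF t(1) wfu] terminal_swap_to_end[OF t(2) wfu]]
    by blast
  have c: "?c1 \<in> carrier (G v1)" "?c2 \<in> carrier (G v2)" "wf z"
    using swap_equiv_wf[OF u(1)] wfu by auto
  have "snoc_syl v2 (?c2 \<otimes>\<^bsub>G v2\<^esub> b) (snoc_syl v1 (?c1 \<otimes>\<^bsub>G v1\<^esub> a) z) \<approx>
      snoc_syl v1 (?c1 \<otimes>\<^bsub>G v1\<^esub> a) (snoc_syl v2 (?c2 \<otimes>\<^bsub>G v2\<^esub> b) z)"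
    using snoc_syl_commute[OF E c(3) v] c a b by simp
  then show ?thesis
    using act_act_two_ends[OF wfu u(1) E v a b] act_act_two_ends[OF wfu u(2) adj_sym[OF E] v(2,1) b a]
      swap_equiv_sym swap_equiv_trans
    by meson
qed

lemma act_swap_one_terminal:
  assumes wfu: "wf u" and t: "terminal v1 u" "\<not> terminal v2 u" and E: "E v1 v2"
    and v: "v1 \<in> V" "v2 \<in> V" and a: "a \<in> carrier (G v1)" and b: "b \<in> carrier (G v2)"
  shows "act (act u v1 a) v2 b \<approx> act (act u v2 b) v1 a"
proof -
  interpret group "G v1" using vertex_group v(1) .
  let ?x = "del_last_at v1 u" and ?c = "last_at v1 u"
  have ne: "v2 \<noteq> v1" and E': "E v2 v1" using E adj_irrefl adj_sym by auto
  have u: "u \<approx> ?x @ [(v1, ?c)]" using terminal_swap_to_end t(1) wfu by blast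
  then have x: "wf ?x" "?c \<in> carrier (G v1)" "\<not> terminal v2 ?x"
    using swap_equiv_wf[OF u] wfu t(2) terminal_swap_equiv[OF u] terminal_snoc_other[OF ne[symmetric]] E'
    by auto
  let ?A = "snoc_syl v1 (?c \<otimes>\<^bsub>G v1\<^esub> a) ?x"
  have "act (act u v1 a) v2 b \<approx> act ?A v2 b"
    using act_swap_equiv[OF wf_act[OF wfu v(1) a] act_swap_equiv_snoc[OF wfu u v(1) a] v(2) b] .
  moreover have "act ?A v2 b = snoc_syl v2 b ?A"
    using act_not_terminal terminal_snoc_syl[OF ne E'] x(3) by metis
  moreover have "snoc_syl v2 b ?A \<approx> snoc_syl v1 (?c \<otimes>\<^bsub>G v1\<^esub> a) (snoc_syl v2 b ?x)"
    using snoc_syl_commute[OF E x(1) v _ b] x(2) a by simp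
  ultimately have lhs: "act (act u v1 a) v2 b \<approx> snoc_syl v1 (?c \<otimes>\<^bsub>G v1\<^esub> a) (snoc_syl v2 b ?x)"
    using swap_equiv_trans by simp
  have "snoc_syl v2 b u \<approx> snoc_syl v2 b (?x @ [(v1,?c)])"
    using snoc_syl_swap_equiv[OF u v(2) b] .
  moreover have "snoc_syl v2 b (?x @ [(v1,?c)]) \<approx> snoc_syl v2 b ?x @ [(v1,?c)]"
    using snoc_syl_snoc_commute[OF E x(1) v x(2) b] .
  ultimately have "act (snoc_syl v2 b u) v1 a \<approx> snoc_syl v1 (?c \<otimes>\<^bsub>G v1\<^esub> a) (snoc_syl v2 b ?x)"
    using act_swap_equiv_snoc[OF wf_snoc_syl[OF wfu v(2) b] _ v(1) a] swap_equiv_trans by blast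
  then show ?thesis
    using lhs act_not_terminal[OF t(2)] swap_equiv_sym swap_equiv_trans by metis
qed

lemma act_swap:
  assumes wfu: "wf u" and E: "E v1 v2"
    and v: "v1 \<in> V" "v2 \<in> V" and a: "a \<in> carrier (G v1)" and b: "b \<in> carrier (G v2)"
  shows "act (act u v1 a) v2 b \<approx> act (act u v2 b) v1 a"
proof -
  have ne: "v1 \<noteq> v2" and E': "E v2 v1" using E adj_irrefl adj_sym by auto
  consider "terminal v1 u" "terminal v2 u" | "terminal v1 u" "\<not> terminal v2 u"
    | "\<not> terminal v1 u" "terminal v2 u" | "\<not> terminal v1 u" "\<not> terminal v2 u"
    by blast
  then show ?thesis
  proof cases
    case 1
    then show ?thesis using act_swap_both_terminal[OF wfu _ _ E v a b] by blast
  next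
    case 2
    then show ?thesis using act_swap_one_terminal[OF wfu _ _ E v a b] by blast
  next
    case 3
    then show ?thesis using act_swap_one_terminal[OF wfu _ _ E' v(2,1) b a] swap_equiv_sym by blast
  next
    case 4
    then have "act (act u v1 a) v2 b = snoc_syl v2 b (snoc_syl v1 a u)"
      "act (act u v2 b) v1 a = snoc_syl v1 a (snoc_syl v2 b u)"
      using act_not_terminal terminal_snoc_syl[OF ne[symmetric] E'] terminal_snoc_syl[OF ne E] by metis+
    then show ?thesis using snoc_syl_commute[OF E wfu v a b] by simp
  qed
qed

section \<open>Normal form\<close>

definition act_word :: "('v \<times> 'g) list \<Rightarrow> ('v \<times> 'g) list \<Rightarrow> ('v \<times> 'g) list" where
  "act_word u w = foldl (\<lambda>u s. act u (fst s) (snd s)) u w"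

lemma act_word_Nil [simp]: "act_word u [] = u"
  unfolding act_word_def by simp

lemma act_word_append: "act_word u (p @ q) = act_word (act_word u p) q"
  unfolding act_word_def by simp

lemma act_word_Cons: "act_word u ((v,a) # q) = act_word (act u v a) q"
  unfolding act_word_def by simp

lemma wf_act_word: "wf u \<Longrightarrow> wf w \<Longrightarrow> wf (act_word u w)"
  by (induction w arbitrary: u) (auto simp: act_word_Cons wf_act)

lemma reduced_act_word: "reduced u \<Longrightarrow> wf w \<Longrightarrow> reduced (act_word u w)"
  by (induction w arbitrary: u) (auto simp: act_word_Cons reduced_act)

lemma act_word_swap_equiv: "wf u \<Longrightarrow> u \<approx> u' \<Longrightarrow> wf w \<Longrightarrow> act_word u w \<approx> act_word u' w"
  by (induction w arbitrary: u u') (auto simp: act_word_Cons act_swap_equiv wf_act)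

lemma act_word_Nil_reduced: "reduced w \<Longrightarrow> act_word [] w \<approx> w"
proof (induction w rule: rev_induct)
  case (snoc s w)
  obtain v a where s: "s = (v,a)" by force
  have w: "reduced w" "\<not> terminal v w" "v \<in> V" "a \<in> carrier (G v)" "a \<noteq> \<one>\<^bsub>G v\<^esub>"
    using snoc.prems s by (simp_all add: reduced_snoc_iff)
  then have "act (act_word [] w) v a \<approx> act w v a"
    using act_swap_equiv[OF wf_act_word snoc.IH] by (simp add: reduced_def)
  then show ?case using s w by (simp add: act_word_append act_word_Cons act_not_terminal snoc_syl_def)
qed simp

lemma act_word_replace_infix:
  assumes "wf (xs @ m @ ys)"
    and "act_word (act_word [] xs) m \<approx> act_word (act_word [] xs) m'"
  shows "act_word [] (xs @ m @ ys) \<approx> act_word [] (xs @ m' @ ys)"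
  using act_word_swap_equiv[OF wf_act_word[OF wf_act_word] assms(2)] assms(1)
  by (simp add: act_word_append)

lemma act_word_gp_move:
  assumes "(w, w') \<in> gp_move V E G"
  shows "act_word [] w \<approx> act_word [] w'"
proof -
  consider "(w, w') \<in> swap_move V E G" | "(w, w') \<in> merge_move V G" | "(w, w') \<in> delete_move V G"
    using assms unfolding gp_move_def by blast
  then show ?thesis
  proof cases
    case 1
    then obtain xs u a v b ys where w: "w = xs @ [(u,a),(v,b)] @ ys"
      and w': "w' = xs @ [(v,b),(u,a)] @ ys" and wf: "wf w" and E: "E u v"
      unfolding swap_move_iff by blast
    have "wf (act_word [] xs)" using wf w by (simp add: wf_act_word)
    then show ?thesis
      using act_word_replace_infix[of xs "[(u,a),(v,b)]" ys "[(v,b),(u,a)]"] act_swap[OF _ E] wf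
      unfolding w w' by (simp add: act_word_Cons)
  next
    case 2
    then obtain xs v a b ys where w: "w = xs @ [(v,a),(v,b)] @ ys"
      and w': "w' = xs @ [(v, a \<otimes>\<^bsub>G v\<^esub> b)] @ ys" and wf: "wf w"
      unfolding merge_move_def by blast
    have "reduced (act_word [] xs)" using wf w by (simp add: reduced_act_word reduced_Nil)
    then show ?thesis
      using act_word_replace_infix[of xs "[(v,a),(v,b)]" ys "[(v, a \<otimes>\<^bsub>G v\<^esub> b)]"] act_merge wf
      unfolding w w' by (simp add: act_word_Cons)
  next
    case 3
    then obtain xs v ys where w: "w = xs @ [(v, \<one>\<^bsub>G v\<^esub>)] @ ys" and w': "w' = xs @ ys"
      and wf: "wf w"
      unfolding delete_move_def by blast
    have "reduced (act_word [] xs)" using wf w by (simp add: reduced_act_word reduced_Nil)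
    then show ?thesis
      using act_word_replace_infix[of xs "[(v, \<one>\<^bsub>G v\<^esub>)]" ys "[]"] act_one wf
      unfolding w w' by (simp add: act_word_Cons)
  qed
qed

lemma act_word_gp_equiv:
  assumes "(w, w') \<in> gp_equiv V E G"
  shows "act_word [] w \<approx> act_word [] w'"
proof -
  have "(w, w') \<in> (gp_move V E G \<union> (gp_move V E G)\<inverse>)\<^sup>*"
    using assms unfolding gp_equiv_def by blast
  then show ?thesis
  proof (induction rule: rtrancl_induct)
    case (step y z)
    then have "act_word [] y \<approx> act_word [] z" using act_word_gp_move swap_equiv_sym by blast
    then show ?case using step.IH swap_equiv_trans by blast
  qed simp
qed

theorem normal_form:
  assumes "(w0, u) \<in> gp_equiv V E G" "(w0, w) \<in> gp_equiv V E G"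
    and "reduced_word V E G u" "reduced_word V E G w"
  shows "u \<approx> w"
proof -
  have "act_word [] u \<approx> act_word [] w"
    using act_word_gp_equiv[OF assms(1)] act_word_gp_equiv[OF assms(2)]
      swap_equiv_sym swap_equiv_trans by blast
  moreover have "act_word [] u \<approx> u" "act_word [] w \<approx> w"
    using act_word_Nil_reduced reduced_word_iff assms(3,4) by auto
  ultimately show ?thesis using swap_equiv_sym swap_equiv_trans by blast
qed

section \<open>Tails\<close>

lemma del_last_of_swap_move:
  assumes "(w, w') \<in> swap_move V E G"
  shows "del_last_of S w \<approx> del_last_of S w'"
proof -
  from assms obtain xs u a v b ys where w: "w = xs @ [(u,a),(v,b)] @ ys"
    and w': "w' = xs @ [(v,b),(u,a)] @ ys" and wf: "wf w" and E: "E u v"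
    unfolding swap_move_iff by blast
  have "u \<noteq> v" using E adj_irrefl by auto
  define S' where "S' = S - fst ` set ys"
  define P where "P = del_last_of (S - fst ` set ([(u,a),(v,b)] @ ys)) xs"
  define Q where "Q = del_last_of S ys"
  have split: "del_last_of S (xs @ m @ ys) =
      del_last_of (S - fst ` set (m @ ys)) xs @ del_last_of S' m @ Q" for m
    unfolding S'_def Q_def by (simp only: del_last_of_append)
  have "fst ` set ([(v,b),(u,a)] @ ys) = fst ` set ([(u,a),(v,b)] @ ys)" by auto
  then have del: "del_last_of S w = P @ del_last_of S' [(u,a),(v,b)] @ Q"
    "del_last_of S w' = P @ del_last_of S' [(v,b),(u,a)] @ Q"
    unfolding w w' P_def split by simp_all
  show ?thesis
  proof (cases "u \<in> S' \<or> v \<in> S'")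
    case True
    then have "del_last_of S' [(u,a),(v,b)] = del_last_of S' [(v,b),(u,a)]"
      using \<open>u \<noteq> v\<close> by (auto simp: del_last_of_def)
    then show ?thesis using del by simp
  next
    case False
    then have "del_last_of S w = P @ [(u,a),(v,b)] @ Q" "del_last_of S w' = P @ [(v,b),(u,a)] @ Q"
      using del by (auto simp: del_last_of_def)
    moreover have "wf (P @ [(u,a),(v,b)] @ Q)"
      using wf w del_last_of_subset[of _ xs] del_last_of_subset[of S ys] wf_subset
      unfolding P_def Q_def by auto
    ultimately show ?thesis using swap_equiv_swap E by metis
  qed
qed

lemma del_last_of_swap_equiv: "w \<approx> w' \<Longrightarrow> del_last_of S w \<approx> del_last_of S w'"
  using swap_equiv_map[of "del_last_of S"] del_last_of_swap_move by blast

definition last_syllables :: "('v \<times> 'g) list \<Rightarrow> ('v \<times> 'g) set" where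
  "last_syllables u = {s. \<exists>x. u \<approx> x @ [s]}"

definition tail_syllables :: "('v \<times> 'g) list \<Rightarrow> nat \<Rightarrow> ('v \<times> 'g) set" where
  "tail_syllables u d = {s. \<exists>w. u \<approx> w \<and> s \<in> set (drop (length w - d) w)}"

lemma last_syllables_subset: "last_syllables u \<subseteq> set u"
  unfolding last_syllables_def using swap_equiv_set by fastforce

lemma tail_syllables_subset: "tail_syllables u d \<subseteq> set u"
  unfolding tail_syllables_def using swap_equiv_set set_drop_subset by fastforce

lemma last_syllables_swap_equiv: "u \<approx> w \<Longrightarrow> last_syllables u = last_syllables w"
  unfolding last_syllables_def by (meson swap_equiv_sym swap_equiv_trans)

lemma inj_on_fst_last_syllables: "inj_on fst (last_syllables u)"
proof
  fix s1 s2 assume s: "s1 \<in> last_syllables u" "s2 \<in> last_syllables u" "fst s1 = fst s2"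
  then obtain x1 x2 where "u \<approx> x1 @ [s1]" "u \<approx> x2 @ [s2]"
    unfolding last_syllables_def by blast
  moreover obtain v b1 b2 where "s1 = (v,b1)" "s2 = (v,b2)"
    using s(3) by (metis prod.collapse)
  ultimately show "s1 = s2"
    using swap_equiv_snoc_same_vertex swap_equiv_sym swap_equiv_trans by blast
qed

lemma clique_fst_last_syllables:
  assumes "wf u"
  shows "clique E (fst ` last_syllables u)"
  unfolding clique_def last_syllables_def using two_ends_adjacent[OF assms] by force

lemma card_last_syllables:
  assumes "finite V" "wf u"
  shows "card (last_syllables u) \<le> clique_number V E"
proof -
  have "fst ` last_syllables u \<subseteq> V"
    using last_syllables_subset assms(2) unfolding wf_word_def by fastforce
  then have "card (fst ` last_syllables u) \<le> clique_number V E"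
    using card_clique_le_clique_number[OF assms(1)] clique_fst_last_syllables[OF assms(2)] by blast
  then show ?thesis using card_image[OF inj_on_fst_last_syllables] by simp
qed

lemma last_of_terminal_vertex:
  assumes "wf w" "terminal (fst s) w" "s = last (filter (\<lambda>t. fst t = fst s) w)"
  shows "s \<in> last_syllables w"
proof -
  have "s = (fst s, last_at (fst s) w)"
    using assms(3) unfolding last_at_def by simp
  then have "w \<approx> del_last_at (fst s) w @ [s]"
    using terminal_swap_to_end[OF assms(2,1)] by simp
  then show ?thesis unfolding last_syllables_def by blast
qed

lemma tail_syllables_Suc_subset:
  assumes "wf u"
  shows "tail_syllables u (Suc d) \<subseteq> last_syllables u \<union> tail_syllables (del_last_of {v. terminal v u} u) d"
proof
  let ?S = "{v. terminal v u}"
  fix s assume "s \<in> tail_syllables u (Suc d)"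
  then obtain w where uw: "u \<approx> w" and s: "s \<in> set (drop (length w - Suc d) w)"
    unfolding tail_syllables_def by blast
  have "w \<noteq> []" using s by auto
  then have "u \<approx> butlast w @ [(fst (last w), snd (last w))]" using uw by simp
  then have "fst (last w) \<in> ?S" using swap_to_end_terminal by blast
  from suffix_del_last_of[OF s this]
  show "s \<in> last_syllables u \<union> tail_syllables (del_last_of ?S u) d"
  proof
    assume "s \<in> set (drop (length (del_last_of ?S w) - d) (del_last_of ?S w))"
    then show ?thesis
      using del_last_of_swap_equiv[OF uw] unfolding tail_syllables_def by blast
  next
    assume s: "fst s \<in> ?S \<and> s = last (filter (\<lambda>t. fst t = fst s) w)"
    have "wf w" "terminal (fst s) w"
      using swap_equiv_wf[OF uw] assms s terminal_swap_equiv[OF uw] by auto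
    then have "s \<in> last_syllables w"
      using last_of_terminal_vertex s by blast
    then show ?thesis using last_syllables_swap_equiv[OF uw] by simp
  qed
qed

lemma tail_syllables_bound:
  assumes "finite V" "wf u"
  shows "finite (tail_syllables u d) \<and> card (tail_syllables u d) \<le> d * clique_number V E"
  using assms(2)
proof (induction d arbitrary: u)
  case 0
  then show ?case unfolding tail_syllables_def by simp
next
  case (Suc d)
  let ?u' = "del_last_of {v. terminal v u} u"
  have "wf ?u'" using Suc.prems del_last_of_subset wf_subset by blast
  then have IH: "finite (tail_syllables ?u' d)" "card (tail_syllables ?u' d) \<le> d * clique_number V E"
    using Suc.IH by auto
  have fin: "finite (last_syllables u)" "finite (tail_syllables u (Suc d))"
    using finite_subset[OF last_syllables_subset] finite_subset[OF tail_syllables_subset] by auto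
  have "card (tail_syllables u (Suc d)) \<le> card (last_syllables u \<union> tail_syllables ?u' d)"
    using card_mono[OF _ tail_syllables_Suc_subset[OF Suc.prems]] fin(1) IH(1) by simp
  also have "\<dots> \<le> card (last_syllables u) + card (tail_syllables ?u' d)"
    by (rule card_Un_le)
  also have "\<dots> \<le> clique_number V E + d * clique_number V E"
    using card_last_syllables[OF assms(1) Suc.prems] IH(2) by (rule add_mono)
  finally show ?case using fin(2) by simp
qed

end

theorem mainTheorem7:
  fixes V :: "'v set" and E :: "'v \<Rightarrow> 'v \<Rightarrow> bool" and G :: "'v \<Rightarrow> 'g monoid"
    and g :: "('v \<times> 'g) list set" and d :: nat
  assumes "finite V"
    and "\<forall>u v. E u v \<longrightarrow> E v u"
    and "\<forall>v. \<not> E v v"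
    and "\<forall>v\<in>V. group (G v)"
    and "g \<in> gp_elems V E G"
    and "d \<ge> 1"
  shows "finite (d_tail V E G g d) \<and> card (d_tail V E G g d) \<le> d * clique_number V E"
proof -
  interpret graph_product V E G
    using assms(2-4) unfolding graph_product_def by blast
  from assms(5) obtain w0 where g: "g = gp_equiv V E G `` {w0}"
    unfolding gp_elems_def by (auto elim: quotientE)
  show ?thesis
  proof (cases "\<exists>u\<in>g. reduced_word V E G u")
    case True
    then obtain u where u: "u \<in> g" "reduced_word V E G u" by blast
    have "d_tail V E G g d \<subseteq> tail_syllables u d"
      using normal_form[of w0 u] u g unfolding d_tail_def tail_syllables_def by blast
    moreover have "wf u" using u(2) unfolding reduced_word_def by blast
    ultimately show ?thesis
      using tail_syllables_bound[OF assms(1)] card_mono finite_subset le_trans by metis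
  next
    case False
    then have "d_tail V E G g d = {}" unfolding d_tail_def by blast
    then show ?thesis by simp
  qed
qed

end
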